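(* Each member of $\mathcal{G}_1$ is cycle-extendable.
   Context: A half biwheel is obtained from a path $P$ of even length (possibly a single vertex) with color classes $A,B$, whose ends $u,v$ lie in $A$, by adding a new vertex $h$ (the hub) adjacent to every vertex of $A$; $u,v$ are the corners (if $P$ is a single vertex the result is $K_2$ and $u=v$). $\mathcal{G}_1$ (generalized wheels) consists of the graphs obtained by taking an odd $k\ge 3$ and disjoint half biwheels $H_0,\dots,H_{k-1}$ with corners $u_i,v_i$, identifying all of their hubs into a single vertex $h$, and adding the edges $v_iu_{i+1}$ for all $0\le i\le k-1$, indices modulo $k$. A matching covered graph (connected, at least two vertices, every edge in a perfect matching) is cycle-extendable if for every even cycle $C$ the graph $G-V(C)$ has a perfect matching. *)

theory Defs
  imports Main
begin

definition simple_graph :: "'a set \<Rightarrow> 'a set set \<Rightarrow> bool" where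
  "simple_graph V E \<longleftrightarrow> finite V \<and> (\<forall>e\<in>E. \<exists>u v. e = {u, v} \<and> u \<noteq> v \<and> u \<in> V \<and> v \<in> V)"

definition connected_graph :: "'a set \<Rightarrow> 'a set set \<Rightarrow> bool" where
  "connected_graph V E \<longleftrightarrow> (\<forall>u\<in>V. \<forall>v\<in>V. (\<lambda>x y. {x, y} \<in> E)\<^sup>*\<^sup>* u v)"

definition perfect_matching_on :: "'a set set \<Rightarrow> 'a set \<Rightarrow> 'a set set \<Rightarrow> bool" where
  "perfect_matching_on E W M \<longleftrightarrow> M \<subseteq> E \<and> (\<forall>e\<in>M. e \<subseteq> W) \<and> (\<forall>w\<in>W. \<exists>!e. e \<in> M \<and> w \<in> e)"

definition has_perfect_matching_on :: "'a set set \<Rightarrow> 'a set \<Rightarrow> bool" where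
  "has_perfect_matching_on E W \<longleftrightarrow> (\<exists>M. perfect_matching_on E W M)"

definition matching_covered :: "'a set \<Rightarrow> 'a set set \<Rightarrow> bool" where
  "matching_covered V E \<longleftrightarrow> simple_graph V E \<and> connected_graph V E \<and> card V \<ge> 2 \<and>
     (\<forall>e\<in>E. \<exists>M. perfect_matching_on E V M \<and> e \<in> M)"

definition even_cycle :: "'a set \<Rightarrow> 'a set set \<Rightarrow> 'a list \<Rightarrow> bool" where
  "even_cycle V E cs \<longleftrightarrow> distinct cs \<and> length cs \<ge> 3 \<and> even (length cs) \<and> set cs \<subseteq> V \<and>
     (\<forall>i < length cs. {cs ! i, cs ! ((i + 1) mod length cs)} \<in> E)"

definition cycle_extendable :: "'a set \<Rightarrow> 'a set set \<Rightarrow> bool" where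
  "cycle_extendable V E \<longleftrightarrow> matching_covered V E \<and>
     (\<forall>cs. even_cycle V E cs \<longrightarrow> has_perfect_matching_on E (V - set cs))"

definition path_edges :: "'a list \<Rightarrow> 'a set set" where
  "path_edges p = {{p ! j, p ! (j + 1)} | j. j + 1 < length p}"

text \<open>Generalized wheels (class G_1), described on the vertex set of the graph itself:
hub h, odd k \<ge> 3, paths P i (i < k) with an odd number of vertices (even length), pairwise
disjoint and avoiding h. Colour class A of P i = vertices at even positions (contains both ends);
hub adjacent to A; corners u_i = hd (P i), v_i = last (P i); edges v_i u_(i+1 mod k).\<close>
definition generalized_wheel :: "'a set \<Rightarrow> 'a set set \<Rightarrow> bool" where
  "generalized_wheel V E \<longleftrightarrow>
     (\<exists>(k::nat) h (P :: nat \<Rightarrow> 'a list).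
        odd k \<and> k \<ge> 3 \<and>
        (\<forall>i<k. odd (length (P i)) \<and> distinct (P i) \<and> h \<notin> set (P i)) \<and>
        (\<forall>i<k. \<forall>j<k. i \<noteq> j \<longrightarrow> set (P i) \<inter> set (P j) = {}) \<and>
        V = insert h (\<Union>i<k. set (P i)) \<and>
        E = (\<Union>i<k. path_edges (P i))
            \<union> (\<Union>i<k. {{h, P i ! j} | j. j < length (P i) \<and> even j})
            \<union> (\<Union>i<k. {{last (P i), hd (P ((i + 1) mod k))}}))"

end

theory Submission
  imports Defs
begin

(* Concatenating the paths of a generalized wheel gives an odd cycle through all vertices other
   than the hub h, the rim, and h is joined to the even positions of every path.
   An even cycle cannot avoid h: it would be a cycle inside the rim, i.e. the whole rim, whose
   length is odd. An even cycle through h consists of h and an arc of the rim with an odd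
   number of vertices, so the rest of the rim is an arc with an even number of vertices, matched
   along its own edges. For matching-coveredness, h together with a hub neighbour a and the arc
   after a form a perfect matching containing every rim edge at odd distance from a; both ends of
   every path are hub neighbours, so each rim edge is at odd distance from one of them. *)

lemma perfect_matching_on_edge: "{x, y} \<in> E \<Longrightarrow> perfect_matching_on E {x, y} {{x, y}}"
  by (auto simp: perfect_matching_on_def)

lemma perfect_matching_on_Un:
  assumes "perfect_matching_on E W1 M1" "perfect_matching_on E W2 M2" "W1 \<inter> W2 = {}"
  shows "perfect_matching_on E (W1 \<union> W2) (M1 \<union> M2)"
proof -
  have M1: "M1 \<subseteq> E" "\<forall>e\<in>M1. e \<subseteq> W1" "\<forall>w\<in>W1. \<exists>!e. e \<in> M1 \<and> w \<in> e"
    using assms(1) by (auto simp: perfect_matching_on_def)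
  have M2: "M2 \<subseteq> E" "\<forall>e\<in>M2. e \<subseteq> W2" "\<forall>w\<in>W2. \<exists>!e. e \<in> M2 \<and> w \<in> e"
    using assms(2) by (auto simp: perfect_matching_on_def)
  have "\<exists>!e. e \<in> M1 \<union> M2 \<and> w \<in> e" if "w \<in> W1 \<union> W2" for w
  proof (cases "w \<in> W1")
    case True
    then have "\<forall>e\<in>M2. w \<notin> e" using M2(2) assms(3) by blast
    then show ?thesis using M1(3) True by blast
  next
    case False
    then have "\<forall>e\<in>M1. w \<notin> e" using M1(2) by blast
    then show ?thesis using M2(3) False that by blast
  qed
  moreover have "M1 \<union> M2 \<subseteq> E" using M1(1) M2(1) by blast
  moreover have "\<forall>e\<in>M1 \<union> M2. e \<subseteq> W1 \<union> W2" using M1(2) M2(2) by blast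
  ultimately show ?thesis unfolding perfect_matching_on_def by blast
qed

definition pair_matching :: "(int \<Rightarrow> 'a) \<Rightarrow> int \<Rightarrow> nat \<Rightarrow> 'a set set" where
  "pair_matching w u c = (\<lambda>i. {w (u + 2 * int i), w (u + 2 * int i + 1)}) ` {..<c}"

lemma perfect_matching_on_pair_matching:
  assumes "inj_on w {u..<u + 2 * int c}" and "\<And>t. {w t, w (t + 1)} \<in> E"
  shows "perfect_matching_on E (w ` {u..<u + 2 * int c}) (pair_matching w u c)"
  using assms(1)
proof (induction c)
  case 0
  then show ?case by (simp add: pair_matching_def perfect_matching_on_def)
next
  case (Suc c)
  let ?t = "u + 2 * int c"
  have split: "{u..<u + 2 * int (Suc c)} = {u..<?t} \<union> {?t, ?t + 1}" by auto
  have "inj_on w {u..<?t}" using Suc.prems by (rule inj_on_subset) auto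
  then have IH: "perfect_matching_on E (w ` {u..<?t}) (pair_matching w u c)" by (rule Suc.IH)
  have "w ` {u..<?t} \<inter> {w ?t, w (?t + 1)} = {}"
    using Suc.prems unfolding split by (auto simp: inj_on_def)
  from perfect_matching_on_Un[OF IH perfect_matching_on_edge[OF assms(2)] this]
  have "perfect_matching_on E (w ` {u..<?t} \<union> {w ?t, w (?t + 1)})
      (pair_matching w u c \<union> {{w ?t, w (?t + 1)}})" .
  moreover have "pair_matching w u (Suc c) = pair_matching w u c \<union> {{w ?t, w (?t + 1)}}"
    by (auto simp: pair_matching_def lessThan_Suc)
  ultimately show ?case by (simp only: split image_Un image_insert image_empty)
qed

lemma path_edges_Nil [simp]: "path_edges [] = {}"
  and path_edges_single [simp]: "path_edges [x] = {}"
  by (simp_all add: path_edges_def)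

lemma path_edges_Cons_Cons [simp]:
  "path_edges (x # y # zs) = insert {x, y} (path_edges (y # zs))"
proof -
  have "{{(x # y # zs) ! j, (x # y # zs) ! (j + 1)} | j. j + 1 < length (x # y # zs)} =
    insert {x, y} {{(y # zs) ! j, (y # zs) ! (j + 1)} | j. j + 1 < length (y # zs)}"
    (is "?l = ?r")
  proof
    show "?l \<subseteq> ?r"
    proof
      fix e assume "e \<in> ?l"
      then obtain j where j: "e = {(x # y # zs) ! j, (x # y # zs) ! (j + 1)}"
        "j + 1 < length (x # y # zs)" by blast
      show "e \<in> ?r"
      proof (cases j)
        case (Suc i)
        then show ?thesis using j by auto
      qed (use j in simp)
    qed
    show "?r \<subseteq> ?l"
    proof safe
      show "\<exists>j. {x, y} = {(x # y # zs) ! j, (x # y # zs) ! (j + 1)} \<and> j + 1 < length (x # y # zs)"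
        by (rule exI[of _ 0]) simp
      fix j assume "j + 1 < length (y # zs)"
      then show "\<exists>j'. {(y # zs) ! j, (y # zs) ! (j + 1)} = {(x # y # zs) ! j', (x # y # zs) ! (j' + 1)} \<and>
        j' + 1 < length (x # y # zs)"
        by (intro exI[of _ "Suc j"]) simp
    qed
  qed
  then show ?thesis by (simp add: path_edges_def)
qed

lemma path_edges_append:
  "xs \<noteq> [] \<Longrightarrow> ys \<noteq> [] \<Longrightarrow>
    path_edges (xs @ ys) = path_edges xs \<union> path_edges ys \<union> {{last xs, hd ys}}"
proof (induction xs rule: induct_list012)
  case (2 x)
  then show ?case by (cases ys) auto
qed auto

lemma path_edges_concat:
  assumes "\<And>i. i \<le> n \<Longrightarrow> P i \<noteq> []"
  shows "path_edges (concat (map P [0..<Suc n])) =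
    (\<Union>i\<le>n. path_edges (P i)) \<union> (\<Union>i<n. {{last (P i), hd (P (Suc i))}})"
  using assms
proof (induction n)
  case (Suc n)
  define C where "C = concat (map P [0..<Suc n])"
  have C_ne: "C \<noteq> []" and last_C: "last C = last (P n)"
    using Suc.prems by (simp_all add: C_def last_append)
  have P_ne: "P (Suc n) \<noteq> []" using Suc.prems by simp
  have eq: "concat (map P [0..<Suc (Suc n)]) = C @ P (Suc n)" by (simp add: C_def)
  have IH: "path_edges C = (\<Union>i\<le>n. path_edges (P i)) \<union> (\<Union>i<n. {{last (P i), hd (P (Suc i))}})"
    unfolding C_def using Suc by simp
  show ?case
    unfolding eq path_edges_append[OF C_ne P_ne] IH last_C by (auto simp: atMost_Suc lessThan_Suc)
qed simp

definition cyclic_nth :: "'a list \<Rightarrow> int \<Rightarrow> 'a" where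
  "cyclic_nth xs i = xs ! nat (i mod int (length xs))"

lemma cyclic_nth_of_nat: "n < length xs \<Longrightarrow> cyclic_nth xs (int n) = xs ! n"
  by (simp add: cyclic_nth_def nat_mod_distrib)

lemma cyclic_nth_of_nat_Suc: "Suc n < length xs \<Longrightarrow> cyclic_nth xs (int n + 1) = xs ! Suc n"
  using cyclic_nth_of_nat[of "Suc n" xs] by (simp add: add.commute)

lemma cyclic_nth_mod: "cyclic_nth xs (i mod int (length xs)) = cyclic_nth xs i"
  by (simp add: cyclic_nth_def)

lemma cyclic_nth_in_set: "xs \<noteq> [] \<Longrightarrow> cyclic_nth xs i \<in> set xs"
  by (simp add: cyclic_nth_def nat_less_iff)

lemma cyclic_nth_surj: "x \<in> set xs \<Longrightarrow> \<exists>i. cyclic_nth xs i = x"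
  by (metis cyclic_nth_of_nat in_set_conv_nth)

lemma cyclic_nth_edges:
  assumes "xs \<noteq> []"
  shows "{{cyclic_nth xs p, cyclic_nth xs (p + 1)} | p. True} = path_edges xs \<union> {{last xs, hd xs}}"
    (is "?l = ?r")
proof
  show "?l \<subseteq> ?r"
  proof
    fix e assume "e \<in> ?l"
    then obtain p where e: "e = {cyclic_nth xs p, cyclic_nth xs (p + 1)}" by blast
    define n where "n = nat (p mod int (length xs))"
    have n: "n < length xs" "int n = p mod int (length xs)"
      using assms by (auto simp: n_def nat_less_iff)
    have p_n: "cyclic_nth xs p = xs ! n" by (simp add: cyclic_nth_def n_def)
    have p1: "cyclic_nth xs (p + 1) = cyclic_nth xs (int n + 1)"
      by (metis cyclic_nth_mod mod_add_left_eq n(2))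
    show "e \<in> ?r"
    proof (cases "n + 1 < length xs")
      case True
      then have "e = {xs ! n, xs ! (n + 1)}" using e p_n p1 by (simp add: cyclic_nth_of_nat_Suc)
      then show ?thesis using True unfolding path_edges_def by blast
    next
      case False
      then have "n = length xs - 1" "int n + 1 = int (length xs)" using n(1) by simp_all
      then have "xs ! n = last xs" "cyclic_nth xs (int n + 1) = hd xs"
        using assms by (simp_all add: last_conv_nth hd_conv_nth cyclic_nth_def)
      then show ?thesis using e p_n p1 by simp
    qed
  qed
next
  have "{xs ! j, xs ! (j + 1)} \<in> ?l" if "j + 1 < length xs" for j
  proof -
    have "{xs ! j, xs ! (j + 1)} = {cyclic_nth xs (int j), cyclic_nth xs (int j + 1)}"
      using that by (simp add: cyclic_nth_of_nat_Suc cyclic_nth_of_nat)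
    then show ?thesis by blast
  qed
  moreover have "{last xs, hd xs} \<in> ?l"
  proof -
    obtain n where n: "length xs = Suc n" using assms by (cases xs) simp_all
    then have "cyclic_nth xs (int n) = last xs" "cyclic_nth xs (int n + 1) = hd xs"
      using assms by (simp_all add: cyclic_nth_of_nat last_conv_nth cyclic_nth_def hd_conv_nth add.commute)
    then have "{last xs, hd xs} = {cyclic_nth xs (int n), cyclic_nth xs (int n + 1)}" by simp
    then show ?thesis by blast
  qed
  ultimately show "?r \<subseteq> ?l" unfolding path_edges_def by blast
qed

lemma even_cycle_rotate:
  assumes "even_cycle V E cs"
  shows "even_cycle V E (rotate n cs)"
proof -
  let ?L = "length cs"
  have edge: "{cs ! j, cs ! ((j + 1) mod ?L)} \<in> E" if "j < ?L" for j
    using assms that unfolding even_cycle_def by blast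
  have "{rotate n cs ! i, rotate n cs ! ((i + 1) mod ?L)} \<in> E" if "i < ?L" for i
  proof -
    have L: "0 < ?L" using that by linarith
    have "rotate n cs ! i = cs ! ((n + i) mod ?L)" using that by (rule nth_rotate)
    moreover have "rotate n cs ! ((i + 1) mod ?L) = cs ! ((n + (i + 1) mod ?L) mod ?L)"
      using L by (intro nth_rotate) simp
    moreover have "(n + (i + 1) mod ?L) mod ?L = ((n + i) mod ?L + 1) mod ?L"
      by (simp add: mod_simps add.assoc)
    ultimately show ?thesis using edge[of "(n + i) mod ?L"] L by simp
  qed
  then show ?thesis using assms unfolding even_cycle_def by simp
qed

lemma image_unit_step_interval:
  fixes s d :: int
  assumes "d = 1 \<or> d = -1"
  obtains t where "(\<lambda>j. s + d * int j) ` {..<m} = {t..<t + int m}"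
  using assms
proof
  assume "d = 1"
  then have "(\<lambda>j. s + d * int j) ` {..<m} = {s..<s + int m}"
    by (auto simp: image_iff intro!: bexI[where x = "nat (x - s)" for x])
  then show ?thesis by (rule that)
next
  assume "d = -1"
  then have "(\<lambda>j. s + d * int j) ` {..<m} = {s - int m + 1..<s - int m + 1 + int m}"
    by (auto simp: image_iff intro!: bexI[where x = "nat (s - x)" for x])
  then show ?thesis by (rule that)
qed

(* Rim positions are integers, read modulo the length of R; A is the set of positions of the hub
   neighbours. The assumption spokes is what puts every rim edge into a perfect matching. *)
locale odd_wheel =
  fixes R :: "'a list" and h :: 'a and A :: "int set"
  assumes distinct_rim: "distinct R" and odd_rim: "odd (length R)" and rim_length: "3 \<le> length R"
    and hub_notin_rim: "h \<notin> set R"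
    and spokes: "\<And>p. \<exists>a\<in>A. odd ((p - a) mod int (length R))"
begin

abbreviation N :: int where "N \<equiv> int (length R)"

abbreviation rim :: "int \<Rightarrow> 'a" where "rim \<equiv> cyclic_nth R"

definition V :: "'a set" where "V = insert h (set R)"

definition E :: "'a set set" where
  "E = {{rim p, rim (p + 1)} | p. True} \<union> {{h, rim a} | a. a \<in> A}"

lemma N_pos: "0 < N" using rim_length by linarith

lemma rim_nonempty: "R \<noteq> []"
  using rim_length by (cases R) simp_all

lemma rim_in_set: "rim x \<in> set R"
  using rim_nonempty by (rule cyclic_nth_in_set)

lemma hub_neq_rim: "h \<noteq> rim x"
  using rim_in_set hub_notin_rim by metis

lemma rim_eq_iff: "rim x = rim y \<longleftrightarrow> N dvd x - y"
proof -
  have len: "0 < length R" using rim_length by linarith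
  then have "nat (x mod N) < length R" "nat (y mod N) < length R"
    by (simp_all add: nat_less_iff)
  then have "rim x = rim y \<longleftrightarrow> nat (x mod N) = nat (y mod N)"
    using distinct_rim by (simp add: cyclic_nth_def nth_eq_iff_index_eq)
  also have "\<dots> \<longleftrightarrow> x mod N = y mod N" using len by (simp add: eq_nat_nat_iff)
  also have "\<dots> \<longleftrightarrow> N dvd x - y" by (rule mod_eq_dvd_iff)
  finally show ?thesis .
qed

lemma inj_on_rim: "inj_on rim {u..<u + N}"
proof
  fix x y assume x: "x \<in> {u..<u + N}" and y: "y \<in> {u..<u + N}" and "rim x = rim y"
  then have dvd: "N dvd x - y" by (simp add: rim_eq_iff)
  show "x = y"
  proof (rule ccontr)
    assume "x \<noteq> y"
    with dvd have "N \<le> \<bar>x - y\<bar>" using dvd_imp_le_int[of "x - y" N] by simp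
    with x y show False by auto
  qed
qed

lemma rim_image: "rim ` {u..<u + N} = set R"
proof (rule card_subset_eq)
  show "rim ` {u..<u + N} \<subseteq> set R" using rim_in_set by blast
  show "card (rim ` {u..<u + N}) = card (set R)"
    using card_image[OF inj_on_rim] distinct_card[OF distinct_rim] by simp
qed simp

lemma rim_edge: "{rim p, rim (p + 1)} \<in> E"
  unfolding E_def by blast

lemma spoke_edge: "a \<in> A \<Longrightarrow> {h, rim a} \<in> E"
  unfolding E_def by blast

lemma rim_neighbour:
  assumes "{rim x, y} \<in> E" and "y \<noteq> h"
  obtains e where "e = 1 \<or> e = -1" and "y = rim (x + e)"
proof -
  obtain p where "{rim x, y} = {rim p, rim (p + 1)}"
    using assms hub_neq_rim unfolding E_def by (auto simp: doubleton_eq_iff)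
  then consider "rim x = rim p" "y = rim (p + 1)" | "rim x = rim (p + 1)" "y = rim p"
    by (auto simp: doubleton_eq_iff)
  then show ?thesis
  proof cases
    case 1
    then have "y = rim (x + 1)" by (simp add: rim_eq_iff dvd_diff_commute)
    then show ?thesis using that by blast
  next
    case 2
    then have "N dvd (p + 1) - x" by (simp add: rim_eq_iff dvd_diff_commute)
    then have "y = rim (x + -1)" using 2 by (simp add: rim_eq_iff algebra_simps)
    then show ?thesis using that by blast
  qed
qed

lemma simple_graph: "simple_graph V E"
  unfolding simple_graph_def
proof
  show "finite V" by (simp add: V_def)
  show "\<forall>e\<in>E. \<exists>u v. e = {u, v} \<and> u \<noteq> v \<and> u \<in> V \<and> v \<in> V"
  proof
    fix e assume "e \<in> E"
    then consider p where "e = {rim p, rim (p + 1)}" | a where "e = {h, rim a}"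
      unfolding E_def by blast
    then show "\<exists>u v. e = {u, v} \<and> u \<noteq> v \<and> u \<in> V \<and> v \<in> V"
    proof cases
      case (1 p)
      have "\<not> N dvd 1" using rim_length zdvd_imp_le[of N 1] by auto
      then have "rim p \<noteq> rim (p + 1)" by (simp add: rim_eq_iff)
      then show ?thesis using 1 rim_in_set unfolding V_def by blast
    next
      case (2 a)
      then show ?thesis using hub_neq_rim rim_in_set unfolding V_def by blast
    qed
  qed
qed

lemma connected_graph: "connected_graph V E"
proof -
  let ?adj = "\<lambda>x y. {x, y} \<in> E"
  have "symp ?adj" by (rule sympI) (metis insert_commute)
  then have sym: "symp ?adj\<^sup>*\<^sup>*" by (rule symp_rtranclp)
  have rim_reach: "?adj\<^sup>*\<^sup>* (rim 0) (rim (int n))" for n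
  proof (induction n)
    case (Suc n)
    moreover have "?adj (rim (int n)) (rim (int (Suc n)))" using rim_edge[of "int n"] by (simp add: add.commute)
    ultimately show ?case by (rule rtranclp.rtrancl_into_rtrancl)
  qed simp
  have rim_reach': "?adj\<^sup>*\<^sup>* (rim 0) (rim x)" for x
    using rim_reach[of "nat (x mod N)"] N_pos by (simp add: cyclic_nth_mod)
  have reach: "?adj\<^sup>*\<^sup>* (rim 0) v" if "v \<in> V" for v
  proof (cases "v = h")
    case True
    obtain a where "a \<in> A" using spokes by blast
    then have "?adj (rim a) h" using spoke_edge by (metis insert_commute)
    with rim_reach'[of a] have "?adj\<^sup>*\<^sup>* (rim 0) h" by (rule rtranclp.rtrancl_into_rtrancl)
    then show ?thesis using True by simp
  next
    case False
    then have "v \<in> rim ` {0..<N}" using that rim_image[of 0] unfolding V_def by simp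
    then show ?thesis using rim_reach' by blast
  qed
  show ?thesis
    unfolding connected_graph_def
  proof (intro ballI)
    fix u v assume "u \<in> V" "v \<in> V"
    then have "?adj\<^sup>*\<^sup>* u (rim 0)" "?adj\<^sup>*\<^sup>* (rim 0) v"
      using reach sympD[OF sym] by blast+
    then show "?adj\<^sup>*\<^sup>* u v" by (rule rtranclp_trans)
  qed
qed

lemma card_V_ge_2: "2 \<le> card V"
proof -
  have "{h, rim 0} \<subseteq> V" "card {h, rim 0} = 2"
    using rim_in_set hub_neq_rim unfolding V_def by auto
  then show ?thesis by (metis card_mono finite_insert finite_set V_def)
qed

definition spoke_matching :: "int \<Rightarrow> 'a set set" where
  "spoke_matching a = insert {h, rim a} (pair_matching rim (a + 1) ((length R - 1) div 2))"

lemma perfect_matching_on_spoke_matching: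
  assumes "a \<in> A"
  shows "perfect_matching_on E V (spoke_matching a)"
proof -
  let ?c = "(length R - 1) div 2"
  have c: "a + 1 + 2 * int ?c = a + N" using odd_rim rim_length by (auto elim: oddE)
  have "inj_on rim {a + 1..<a + 1 + 2 * int ?c}"
    using inj_on_rim[of a] unfolding c by (rule inj_on_subset) auto
  from perfect_matching_on_pair_matching[OF this rim_edge]
  have arc: "perfect_matching_on E (rim ` {a + 1..<a + N}) (pair_matching rim (a + 1) ?c)"
    by (simp only: c)
  have "{a..<a + N} = insert a {a + 1..<a + N}" using N_pos by auto
  then have V: "V = {h, rim a} \<union> rim ` {a + 1..<a + N}"
    using rim_image[of a] unfolding V_def by auto
  have "rim a \<notin> rim ` {a + 1..<a + N}"
  proof
    assume "rim a \<in> rim ` {a + 1..<a + N}"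
    then obtain x where x: "x \<in> {a + 1..<a + N}" "rim a = rim x" by blast
    then have "a = x" using inj_onD[OF inj_on_rim[of a] x(2)] N_pos by simp
    with x show False by simp
  qed
  then have "{h, rim a} \<inter> rim ` {a + 1..<a + N} = {}" using hub_neq_rim by auto
  from perfect_matching_on_Un[OF perfect_matching_on_edge[OF spoke_edge[OF assms]] arc this]
  show ?thesis unfolding V spoke_matching_def by simp
qed

lemma rim_edge_in_spoke_matching:
  assumes "odd ((p - a) mod N)"
  shows "{rim p, rim (p + 1)} \<in> spoke_matching a"
proof -
  define r where "r = (p - a) mod N"
  obtain i where i: "r = 2 * i + 1" using assms unfolding r_def by (auto elim: oddE)
  have "0 \<le> r" "r < N" using N_pos unfolding r_def by simp_all
  moreover have "r \<noteq> N - 1" using odd_rim assms unfolding r_def by auto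
  ultimately have "0 \<le> i" "nat i < (length R - 1) div 2" using i odd_rim by (auto elim!: oddE)
  moreover have "a + 1 + 2 * i = p - (p - a) div N * N"
    using div_mult_mod_eq[of "p - a" N] i unfolding r_def by linarith
  then have "rim (a + 1 + 2 * i) = rim p" "rim (a + 1 + 2 * i + 1) = rim (p + 1)"
    by (simp_all add: rim_eq_iff)
  ultimately show ?thesis
    unfolding spoke_matching_def pair_matching_def by force
qed

lemma edge_in_perfect_matching:
  assumes "e \<in> E"
  shows "\<exists>M. perfect_matching_on E V M \<and> e \<in> M"
proof -
  consider p where "e = {rim p, rim (p + 1)}" | a where "a \<in> A" "e = {h, rim a}"
    using assms unfolding E_def by blast
  then show ?thesis
  proof cases
    case (1 p)
    obtain a where "a \<in> A" "odd ((p - a) mod N)" using spokes by blast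
    then show ?thesis
      using 1 perfect_matching_on_spoke_matching rim_edge_in_spoke_matching by blast
  next
    case (2 a)
    then show ?thesis
      using perfect_matching_on_spoke_matching unfolding spoke_matching_def by blast
  qed
qed

lemma matching_covered: "matching_covered V E"
  using simple_graph connected_graph card_V_ge_2 edge_in_perfect_matching
  unfolding matching_covered_def by blast

lemma rim_walk:
  assumes "distinct xs" and "set xs \<subseteq> set R"
    and adj: "\<And>j. Suc j < length xs \<Longrightarrow> {xs ! j, xs ! Suc j} \<in> E"
  obtains s d where "d = 1 \<or> d = -1" and "\<And>j. j < length xs \<Longrightarrow> xs ! j = rim (s + d * int j)"
proof -
  have not_hub: "xs ! j \<noteq> h" if "j < length xs" for j
    using assms(2) that hub_notin_rim nth_mem by blast
  obtain s where s: "xs \<noteq> [] \<Longrightarrow> xs ! 0 = rim s"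
  proof (cases "xs = []")
    case False
    then have "xs ! 0 \<in> rim ` {0..<N}" using assms(2) rim_image[of 0] by auto
    then show ?thesis using that by blast
  qed (use that in blast)
  obtain d where d: "d = 1 \<or> d = -1" and d1: "1 < length xs \<Longrightarrow> xs ! 1 = rim (s + d)"
  proof (cases "1 < length xs")
    case True
    moreover from True have "xs \<noteq> []" by (cases xs) auto
    ultimately have "{rim s, xs ! 1} \<in> E" using adj[of 0] s by simp
    then obtain e where "e = 1 \<or> e = -1" "xs ! 1 = rim (s + e)"
      by (rule rim_neighbour[OF _ not_hub[OF True]])
    then show ?thesis using that by blast
  qed (use that in auto)
  have "\<forall>i\<le>j. xs ! i = rim (s + d * int i)" if "j < length xs" for j
    using that
  proof (induction j)
    case (Suc j)
    then have IH: "\<forall>i\<le>j. xs ! i = rim (s + d * int i)" by simp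
    have "xs ! Suc j = rim (s + d * int (Suc j))"
    proof (cases j)
      case (Suc i)
      have "{rim (s + d * int j), xs ! Suc j} \<in> E" using adj[of j] IH Suc.prems by simp
      then obtain e where e: "e = 1 \<or> e = -1" "xs ! Suc j = rim (s + d * int j + e)"
        by (rule rim_neighbour[OF _ not_hub[OF Suc.prems]])
      \<comment> \<open>Turning back would revisit the vertex before the current one.\<close>
      have "xs ! Suc j \<noteq> xs ! i" using assms(1) Suc.prems Suc by (simp add: nth_eq_iff_index_eq)
      then have "e = d" using e d IH Suc by (auto simp: algebra_simps)
      then show ?thesis using e by (simp add: algebra_simps)
    qed (use d1 Suc.prems in simp)
    then show ?case using IH le_Suc_eq by blast
  qed (use s in auto)
  then show ?thesis using that d by blast
qed

lemma hub_in_even_cycle: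
  assumes cycle: "even_cycle V E cs"
  shows "h \<in> set cs"
proof (rule ccontr)
  \<comment> \<open>A cycle avoiding the hub walks around the rim in one direction, so its closing edge
    forces N to divide its length L or L - 2; but L \<le> N, L is even and N is odd.\<close>
  assume hub: "h \<notin> set cs"
  let ?L = "length cs"
  have cs: "distinct cs" "3 \<le> ?L" "even ?L" "set cs \<subseteq> set R"
    using cycle hub unfolding even_cycle_def V_def by auto
  have edge: "{cs ! i, cs ! ((i + 1) mod ?L)} \<in> E" if "i < ?L" for i
    using cycle that unfolding even_cycle_def by blast
  have adj: "{cs ! j, cs ! Suc j} \<in> E" if "Suc j < ?L" for j
    using edge[of j] that by simp
  obtain s d where d: "d = 1 \<or> d = -1" and walk: "\<And>j. j < ?L \<Longrightarrow> cs ! j = rim (s + d * int j)"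
    using rim_walk[OF cs(1,4) adj] by metis
  have "?L \<le> length R"
    using card_mono[OF _ cs(4)] distinct_card[OF cs(1)] distinct_card[OF distinct_rim] by simp
  obtain n where n: "?L = Suc n" using cs(2) by (cases ?L) simp_all
  have "{cs ! n, cs ! 0} \<in> E" using edge[of n] n by simp
  then have "{rim (s + d * int n), rim s} \<in> E" using walk[of n] walk[of 0] n by simp
  then obtain e where e: "e = 1 \<or> e = -1" "rim s = rim (s + d * int n + e)"
    by (rule rim_neighbour[OF _ not_sym[OF hub_neq_rim]])
  define X where "X = d * int n + e"
  have "N dvd s - (s + X)" using e(2) unfolding X_def by (simp only: rim_eq_iff add.assoc)
  then have "N dvd X" by simp
  have "X = int n + 1 \<or> X = int n - 1 \<or> X = 1 - int n \<or> X = - int n - 1"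
    using d e(1) unfolding X_def by (elim disjE) simp_all
  moreover have "odd n" "2 \<le> n" using cs(2,3) n by simp_all
  ultimately have "even X" "X \<noteq> 0" "\<bar>X\<bar> \<le> int ?L" unfolding n by (elim disjE; simp)+
  have "N \<le> \<bar>X\<bar>" using dvd_imp_le_int[OF \<open>X \<noteq> 0\<close> \<open>N dvd X\<close>] by simp
  then have "\<bar>X\<bar> = N" using \<open>\<bar>X\<bar> \<le> int ?L\<close> \<open>?L \<le> length R\<close> by simp
  then have "even N" using \<open>even X\<close> by (metis dvd_abs_iff)
  then show False using odd_rim by simp
qed

lemma hub_cycle_complement_has_perfect_matching:
  assumes cycle: "even_cycle V E (h # xs)"
  shows "has_perfect_matching_on E (V - set (h # xs))"
proof -
  let ?m = "length xs"
  have xs: "distinct xs" "set xs \<subseteq> set R" "odd ?m" "?m \<le> length R" and "h \<notin> set xs"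
    using cycle card_mono[of "set R" "set xs"] distinct_card[of xs] distinct_card[OF distinct_rim]
    unfolding even_cycle_def V_def by auto
  have adj: "{xs ! j, xs ! Suc j} \<in> E" if "Suc j < ?m" for j
    using cycle that unfolding even_cycle_def by (auto dest!: spec[of _ "Suc j"])
  obtain s d where d: "d = 1 \<or> d = -1" and walk: "\<And>j. j < ?m \<Longrightarrow> xs ! j = rim (s + d * int j)"
    using rim_walk[OF xs(1,2) adj] by metis
  obtain t where t: "(\<lambda>j. s + d * int j) ` {..<?m} = {t..<t + int ?m}"
    using image_unit_step_interval[OF d] by blast
  have "set xs = (\<lambda>j. xs ! j) ` {..<?m}" by (auto simp: in_set_conv_nth)
  also have "\<dots> = rim ` (\<lambda>j. s + d * int j) ` {..<?m}"
    unfolding image_image by (rule image_cong) (simp_all add: walk)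
  finally have "set xs = rim ` {t..<t + int ?m}" unfolding t .
  then have "V - set (h # xs) = rim ` {t..<t + N} - rim ` {t..<t + int ?m}"
    using rim_image[of t] \<open>h \<notin> set xs\<close> hub_notin_rim unfolding V_def by auto
  also have "\<dots> = rim ` ({t..<t + N} - {t..<t + int ?m})"
    using xs(4) by (intro inj_on_image_set_diff[OF inj_on_rim[of t], symmetric]) auto
  also have "{t..<t + N} - {t..<t + int ?m} = {t + int ?m..<t + N}" by auto
  finally have complement: "V - set (h # xs) = rim ` {t + int ?m..<t + N}" .
  define c where "c = (length R - ?m) div 2"
  have "even (length R - ?m)" using xs(3,4) odd_rim by simp
  then have "?m + 2 * c = length R" using xs(4) unfolding c_def by simp
  then have c: "t + int ?m + 2 * int c = t + N" by linarith
  have "inj_on rim {t + int ?m..<t + int ?m + 2 * int c}"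
    unfolding c using inj_on_rim[of t] by (rule inj_on_subset) auto
  from perfect_matching_on_pair_matching[OF this rim_edge]
  show ?thesis unfolding complement has_perfect_matching_on_def c by blast
qed

lemma cycle_extendable: "cycle_extendable V E"
  unfolding cycle_extendable_def
proof (intro conjI allI impI)
  show "matching_covered V E" by (rule matching_covered)
next
  fix cs assume cycle: "even_cycle V E cs"
  then obtain i where i: "i < length cs" "cs ! i = h"
    using hub_in_even_cycle by (metis in_set_conv_nth)
  moreover have "cs \<noteq> []" using i(1) by auto
  ultimately have "hd (rotate i cs) = h" by (simp add: hd_rotate_conv_nth)
  then obtain xs where rot: "rotate i cs = h # xs"
    using i(1) by (cases "rotate i cs") auto
  have "has_perfect_matching_on E (V - set (h # xs))"
    using even_cycle_rotate[OF cycle, of i] unfolding rot by (rule hub_cycle_complement_has_perfect_matching)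
  then show "has_perfect_matching_on E (V - set cs)"
    by (metis rot set_rotate)
qed

end

lemma exists_odd_residue:
  fixes N a b p :: int
  assumes N: "0 < N" and ab: "a mod N \<noteq> b mod N"
  shows "\<exists>c\<in>{a, a + 1, b, b + 1}. odd ((p - c) mod N)"
proof -
  have pair: "\<exists>c\<in>{x, x + 1}. odd ((p - c) mod N)" if "p mod N \<noteq> x mod N" for x
  proof -
    define r where "r = (p - x) mod N"
    have "r \<noteq> 0" using that unfolding r_def by (simp add: mod_eq_dvd_iff dvd_eq_mod_eq_0)
    then have r: "0 < r" "r < N"
      using pos_mod_sign[OF N, of "p - x"] pos_mod_bound[OF N, of "p - x"] unfolding r_def by linarith+
    have "(p - (x + 1)) mod N = (r - 1) mod N" unfolding r_def by (simp add: mod_simps algebra_simps)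
    also have "\<dots> = r - 1" using r by simp
    finally show ?thesis unfolding r_def by auto
  qed
  show ?thesis
  proof (cases "p mod N = a mod N")
    case True
    then show ?thesis using pair[of b] ab by auto
  next
    case False
    then show ?thesis using pair[of a] by auto
  qed
qed

definition wheel_vertices :: "nat \<Rightarrow> 'a \<Rightarrow> (nat \<Rightarrow> 'a list) \<Rightarrow> 'a set" where
  "wheel_vertices k h P = insert h (\<Union>i<k. set (P i))"

definition wheel_edges :: "nat \<Rightarrow> 'a \<Rightarrow> (nat \<Rightarrow> 'a list) \<Rightarrow> 'a set set" where
  "wheel_edges k h P = (\<Union>i<k. path_edges (P i))
     \<union> (\<Union>i<k. {{h, P i ! j} | j. j < length (P i) \<and> even j})
     \<union> (\<Union>i<k. {{last (P i), hd (P ((i + 1) mod k))}})"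

(* The assumptions are phrased as in generalized_wheel_def, so that generalized_wheel_iff is a
   rewrite. *)
locale wheel_paths =
  fixes k :: nat and h :: 'a and P :: "nat \<Rightarrow> 'a list"
  assumes odd_k: "odd k" and k_ge_3: "3 \<le> k"
    and paths: "\<forall>i<k. odd (length (P i)) \<and> distinct (P i) \<and> h \<notin> set (P i)"
    and disjoint: "\<forall>i<k. \<forall>j<k. i \<noteq> j \<longrightarrow> set (P i) \<inter> set (P j) = {}"
begin

definition rim_list :: "'a list" where "rim_list = concat (map P [0..<k])"

definition hub_neighbours :: "'a set" where
  "hub_neighbours = (\<Union>i<k. {P i ! j | j. j < length (P i) \<and> even j})"

definition spoke_positions :: "int set" where
  "spoke_positions = {a. cyclic_nth rim_list a \<in> hub_neighbours}"

lemma path_nonempty: "i < k \<Longrightarrow> P i \<noteq> []"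
  using paths by auto

lemma distinct_rim_list: "distinct rim_list"
proof -
  have "distinct (concat (map P [0..<n]))" if "n \<le> k" for n
    using that
  proof (induction n)
    case (Suc n)
    have "set (P i) \<inter> set (P n) = {}" if "i < n" for i
      using disjoint Suc.prems that by simp
    then show ?case using Suc paths by fastforce
  qed simp
  then show ?thesis unfolding rim_list_def by simp
qed

lemma rim_list_decomp: "rim_list = P 0 @ P 1 @ P 2 @ concat (map P [3..<k])"
proof -
  have "[0..<k] = 0 # 1 # 2 # [3..<k]" using k_ge_3 by (simp add: upt_conv_Cons numeral_3_eq_3)
  then show ?thesis by (simp add: rim_list_def)
qed

lemma odd_length_rim_list: "odd (length rim_list)"
proof -
  have "even (length (concat (map P [0..<n]))) \<longleftrightarrow> even n" if "n \<le> k" for n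
    using that by (induction n) (use paths in auto)
  then show ?thesis using odd_k unfolding rim_list_def by blast
qed

lemma length_rim_list_ge_3: "3 \<le> length rim_list"
proof -
  have pos: "0 < length (P i)" if "i < k" for i using paths that odd_pos by blast
  have "length (P 0) + length (P 1) + length (P 2) \<le> length rim_list"
    unfolding rim_list_decomp by simp
  then show ?thesis using pos[of 0] pos[of 1] pos[of 2] k_ge_3 by linarith
qed

lemma set_rim_list: "set rim_list = (\<Union>i<k. set (P i))"
  unfolding rim_list_def by auto

lemma spokes: "\<exists>a\<in>spoke_positions. odd ((p - a) mod int (length rim_list))"
proof -
  \<comment> \<open>The ends of P 0 and P 1 at their junction, and those of P 1 and P 2, are two pairs of
    consecutive rim vertices adjacent to the hub.\<close>
  define a b where "a = length (P 0) - 1" and "b = length (P 0) + length (P 1) - 1"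
  have l: "odd (length (P 0))" "odd (length (P 1))" "0 < length (P 2)"
    using paths path_nonempty[of 2] k_ge_3 by auto
  have pos: "int n \<in> spoke_positions" if "n < length rim_list" "rim_list ! n \<in> hub_neighbours" for n
    using that by (simp add: spoke_positions_def cyclic_nth_of_nat)
  have "rim_list ! a = P 0 ! a" "rim_list ! Suc a = P 1 ! 0" "rim_list ! b = P 1 ! (length (P 1) - 1)"
    "rim_list ! Suc b = P 2 ! 0" "a < b" "Suc b < length rim_list"
    using l unfolding rim_list_decomp a_def b_def by (auto simp: nth_append elim!: oddE)
  moreover have "P 0 ! a \<in> hub_neighbours" "P 1 ! 0 \<in> hub_neighbours"
    "P 1 ! (length (P 1) - 1) \<in> hub_neighbours" "P 2 ! 0 \<in> hub_neighbours"
    using l k_ge_3 unfolding hub_neighbours_def a_def by (fastforce elim!: oddE)+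
  ultimately have "{int a, int a + 1, int b, int b + 1} \<subseteq> spoke_positions"
    using pos[of a] pos[of "Suc a"] pos[of b] pos[of "Suc b"] by (simp add: add.commute)
  moreover have "int a mod int (length rim_list) \<noteq> int b mod int (length rim_list)"
    using \<open>a < b\<close> \<open>Suc b < length rim_list\<close> by simp
  moreover have "0 < int (length rim_list)" using length_rim_list_ge_3 by linarith
  ultimately show ?thesis using exists_odd_residue[of "int (length rim_list)" "int a" "int b" p] by blast
qed

lemma odd_wheel: "odd_wheel rim_list h spoke_positions"
  using distinct_rim_list odd_length_rim_list length_rim_list_ge_3 spokes paths
  by unfold_locales (auto simp: set_rim_list)

lemma rim_list_cycle_edges:
  "path_edges rim_list \<union> {{last rim_list, hd rim_list}} =
    (\<Union>i<k. path_edges (P i)) \<union> (\<Union>i<k. {{last (P i), hd (P ((i + 1) mod k))}})"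
proof -
  obtain n where k: "k = Suc n" using k_ge_3 by (cases k) auto
  have "path_edges rim_list = (\<Union>i\<le>n. path_edges (P i)) \<union> (\<Union>i<n. {{last (P i), hd (P (Suc i))}})"
    unfolding rim_list_def unfolding k by (rule path_edges_concat) (use path_nonempty k in auto)
  moreover have "last rim_list = last (P n)"
    using path_nonempty[of n] unfolding rim_list_def unfolding k by simp
  moreover have "hd rim_list = hd (P 0)"
    using path_nonempty[of 0] k_ge_3 unfolding rim_list_decomp by simp
  moreover have "(\<Union>i<k. {{last (P i), hd (P ((i + 1) mod k))}}) =
      (\<Union>i<n. {{last (P i), hd (P (Suc i))}}) \<union> {{last (P n), hd (P 0)}}"
    unfolding k lessThan_Suc by auto
  ultimately show ?thesis unfolding k lessThan_Suc_atMost by auto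
qed

lemma spoke_edges:
  "{{h, cyclic_nth rim_list a} | a. a \<in> spoke_positions} =
    (\<Union>i<k. {{h, P i ! j} | j. j < length (P i) \<and> even j})"
proof -
  have "hub_neighbours \<subseteq> set rim_list" unfolding hub_neighbours_def set_rim_list by auto
  then have "{{h, cyclic_nth rim_list a} | a. a \<in> spoke_positions} = {{h, x} | x. x \<in> hub_neighbours}"
    unfolding spoke_positions_def by (auto dest!: cyclic_nth_surj)
  then show ?thesis unfolding hub_neighbours_def by auto
qed

lemma cycle_extendable: "cycle_extendable (wheel_vertices k h P) (wheel_edges k h P)"
proof -
  have "wheel_vertices k h P = odd_wheel.V rim_list h"
    unfolding wheel_vertices_def odd_wheel.V_def[OF odd_wheel] set_rim_list ..
  moreover have "wheel_edges k h P = odd_wheel.E rim_list h spoke_positions"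
    unfolding wheel_edges_def odd_wheel.E_def[OF odd_wheel] cyclic_nth_edges[OF odd_wheel.rim_nonempty[OF odd_wheel]]
      rim_list_cycle_edges spoke_edges by auto
  ultimately show ?thesis using odd_wheel.cycle_extendable[OF odd_wheel] by simp
qed

end

lemma generalized_wheel_iff:
  "generalized_wheel V E \<longleftrightarrow>
    (\<exists>k h P. wheel_paths k h P \<and> V = wheel_vertices k h P \<and> E = wheel_edges k h P)"
  unfolding generalized_wheel_def wheel_paths_def wheel_vertices_def wheel_edges_def
  by (simp only: conj_assoc)

theorem proposition5p8:
  fixes V :: "'a set" and E :: "'a set set"
  assumes "generalized_wheel V E"
  shows "cycle_extendable V E"
proof -
  obtain k h P where "wheel_paths k h P" "V = wheel_vertices k h P" "E = wheel_edges k h P"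
    using assms unfolding generalized_wheel_iff by blast
  then show ?thesis by (simp add: wheel_paths.cycle_extendable)
qed

end
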